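(* Let $A$ be a nontrivial closed class of decision tables from $\mathcal M_2^\infty$ and $\psi$ a bounded complexity measure. If $\mathcal H^\infty_{\psi,A}$ is everywhere defined, then for every $n\in\omega$ the value $G_{\psi,A}(n)$ is defined and $\mathcal H^\infty_{\psi,A}(n)\ge G_{\psi,A}(n)-1$.
   Context: Notation: $\omega=\{0,1,2,\dots\}$; $\mathcal P(\omega)$ is the set of nonempty finite subsets of $\omega$; $E_2=\{0,1\}$. $P=\{f_i:i\in\omega\}$ is a set of attributes, $f_i\neq f_j$ for $i\ne j$. Decision tables: $\mathcal M_2^\infty$ is the set of rectangular tables filled with numbers from $E_2$, whose columns are labeled with pairwise different attributes from $P$, whose rows are pairwise different, and each row of which is labeled with a set from $\mathcal P(\omega)$ (its set of decisions). The empty table (no rows) is denoted $\Lambda$ and belongs to $\mathcal M_2^\infty$. For $T\in\mathcal M_2^\infty$: $\Pi(T)$ is the intersection of the decision sets of all rows (common decisions); $\mathrm{At}(T)$ is the set of attributes labeling columns. For nonempty $T$, $\Omega_2(T)$ is the set of finite words (including the empty word $\lambda$) over the alphabet $\{(f_i,\delta):f_i\in\mathrm{At}(T),\delta\in E_2\}$; for $\alpha=(f_{i_1},\delta_1)\cdots(f_{i_m},\delta_m)$, $T\alpha$ is the subtable of $T$ consisting of the rows having value $\delta_j$ in the column $f_{i_j}$ for all $j$, and $T\lambda=T$. Operations: for $D\subseteq\mathrm{At}(T)$, $I(D,T)$ is obtained from $T$ by deleting the columns labeled with attributes from $D$ and, in each group of rows coinciding on the remaining columns, keeping only the first row; $I(\mathrm{At}(T),T)=\Lambda$.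 For $\nu:E_2^{|\mathrm{At}(T)|}\to\mathcal P(\omega)$, $J(\nu,T)$ is obtained by replacing the decision set of each row $\bar\delta$ by $\nu(\bar\delta)$. $[T]=\{J(\nu,I(D,T)):D\subseteq\mathrm{At}(T),\ \nu:E_2^{|\mathrm{At}(T)\setminus D|}\to\mathcal P(\omega)\}$; for nonempty $A\subseteq\mathcal M_2^\infty$, $[A]=\bigcup_{T\in A}[T]$. $A$ is a closed class if $[A]=A$; nontrivial if it contains a nonempty table. Decision trees: a $2$-decision tree is a finite directed rooted tree with at least two nodes in which the root and the edges leaving the root are unlabeled, each terminal node is labeled with a decision from $\omega$, and each other node is labeled with an attribute from $P$, each edge leaving such a node being labeled with a number from $E_2$. $\mathrm{At}(\Gamma)$ is the set of attributes labeling nodes of $\Gamma$. For a complete path $\tau=v_1,d_1,\dots,v_m,d_m,v_{m+1}$ (from the root to a terminal node), $\pi(\tau)=\lambda$ if $m=1$, and otherwise $\pi(\tau)=(f_{i_2},\delta_2)\cdots(f_{i_m},\delta_m)$ where $v_j$ is labeled $f_{i_j}$ and $d_j$ is labeled $\delta_j$; $T(\tau)=T\pi(\tau)$. For $T\ne\Lambda$, a nondeterministic decision tree for $T$ is a $2$-decision tree $\Gamma$ with $\mathrm{At}(\Gamma)\subseteq\mathrm{At}(T)$ such that every row of $T$ belongs to $T(\tau)$ for some complete path $\tau$, and for every complete path $\tau$ either $T(\tau)=\Lambda$ or the decision at the terminal node of $\tau$ belongs to $\Pi(T(\tau))$. A deterministic decision tree for $T$ is a nondeterministic decision tree for $T$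 in which, additionally, exactly one edge leaves the root and the edges leaving any node that is neither the root nor terminal are labeled with pairwise different numbers. Complexity measures: a partially bounded complexity measure is a function $\psi:P^*\to\omega$ on finite words over $P$ such that for all words $\alpha_1,\alpha_2$: $\psi(\alpha_1)=0$ iff $\alpha_1=\lambda$; $\psi(\alpha_1)$ is invariant under permutation of letters; $\psi(\alpha_1)\le\psi(\alpha_1\alpha_2)$; $\psi(\alpha_1\alpha_2)\le\psi(\alpha_1)+\psi(\alpha_2)$. It is bounded if in addition $\psi(\alpha)\ge|\alpha|$ for all $\alpha$. $\psi$ is extended to words $(f_{i_1},\delta_1)\cdots(f_{i_m},\delta_m)$ by $\psi(f_{i_1}\cdots f_{i_m})$ ($\psi(\lambda)=0$). For a $2$-decision tree $\Gamma$, $\psi(\Gamma)=\max_\tau\psi(\pi(\tau))$ over complete paths. For $T\ne\Lambda$, $\psi^d(T)$ (resp. $\psi^a(T)$) is the minimum of $\psi(\Gamma)$ over deterministic (resp. nondeterministic) decision trees $\Gamma$ for $T$; $\psi^d(\Lambda)=\psi^a(\Lambda)=0$. Parameters: $m_\psi(T)=\max\{\psi(f_i):f_i\in\mathrm{At}(T)\}$, $m_\psi(\Lambda)=0$. A word $\alpha\in\Omega_2(T)$ is annihilating for $T$ if $T\alpha=\Lambda$ and $\alpha$ contains no two letters $(f_i,\delta),(f_i,\sigma)$ with $\delta\ne\sigma$; it is irreducible if no word obtained from $\alpha$ by deleting some (at least one) letters is annihilating for $T$; $G(T)$ is the maximum length of an irreducible annihilating word for $T$ if one exists, and $0$ otherwise;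 $G(\Lambda)=0$. For $n\in\omega$: $A_\psi(n)=\{T\in A:m_\psi(T)\le n\}$; $G_{\psi,A}(n)$ is undefined if $\{G(T):T\in A_\psi(n)\}$ is infinite, else its maximum; $\mathcal H^\infty_{\psi,A}(n)$ is undefined if $\{\psi^d(T):T\in A,\psi^a(T)\le n\}$ is infinite, else its maximum. *)

theory Defs
  imports Main "HOL-Library.Sublist" "HOL-Library.Multiset"
begin

text \<open>Attribute f_i is represented by its index i :: nat; E_2 = {0,1} is represented
  by bool (False = 0, True = 1). A table is a pair (column labels, rows), each row being
  a pair (tuple of values, set of decisions).\<close>

type_synonym table = "nat list \<times> (bool list \<times> nat set) list"

definition cols :: "table \<Rightarrow> nat list" where "cols T = fst T"
definition rows :: "table \<Rightarrow> (bool list \<times> nat set) list" where "rows T = snd T"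

definition At :: "table \<Rightarrow> nat set" where "At T = set (cols T)"

definition Lambda :: table where "Lambda = ([], [])"

definition Pfin :: "nat set set" where "Pfin = {S. finite S \<and> S \<noteq> {}}"

definition in_M2 :: "table \<Rightarrow> bool" where
  "in_M2 T \<longleftrightarrow> distinct (cols T) \<and> distinct (map fst (rows T))
     \<and> (\<forall>rd\<in>set (rows T). length (fst rd) = length (cols T) \<and> snd rd \<in> Pfin)
     \<and> (rows T = [] \<longleftrightarrow> cols T = [])"

definition Pi_tab :: "table \<Rightarrow> nat set" where
  "Pi_tab T = (\<Inter>rd\<in>set (rows T). snd rd)"

definition val :: "table \<Rightarrow> bool list \<Rightarrow> nat \<Rightarrow> bool" where
  "val T r f = the (map_of (zip (cols T) r) f)"

definition subtab :: "table \<Rightarrow> (nat \<times> bool) list \<Rightarrow> table" where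
  "subtab T \<alpha> = (let rs = filter (\<lambda>rd. \<forall>fd\<in>set \<alpha>. val T (fst rd) (fst fd) = snd fd) (rows T)
                 in if rs = [] then Lambda else (cols T, rs))"

definition in_Omega2 :: "table \<Rightarrow> (nat \<times> bool) list \<Rightarrow> bool" where
  "in_Omega2 T \<alpha> \<longleftrightarrow> (\<forall>fd\<in>set \<alpha>. fst fd \<in> At T)"

definition dedup_first :: "('a \<times> 'b) list \<Rightarrow> ('a \<times> 'b) list" where
  "dedup_first xs = [xs ! i. i \<leftarrow> [0..<length xs], \<forall>j<i. fst (xs ! j) \<noteq> fst (xs ! i)]"

definition I_op :: "nat set \<Rightarrow> table \<Rightarrow> table" where
  "I_op D T = (if At T \<subseteq> D then Lambda else
     (filter (\<lambda>f. f \<notin> D) (cols T),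
      dedup_first (map (\<lambda>rd. (map fst (filter (\<lambda>p. snd p \<notin> D) (zip (fst rd) (cols T))), snd rd))
                       (rows T))))"

definition J_op :: "(bool list \<Rightarrow> nat set) \<Rightarrow> table \<Rightarrow> table" where
  "J_op \<nu> T = (cols T, map (\<lambda>rd. (fst rd, \<nu> (fst rd))) (rows T))"

definition closure1 :: "table \<Rightarrow> table set" where
  "closure1 T = {J_op \<nu> (I_op D T) | D \<nu>. D \<subseteq> At T \<and>
      (\<forall>v. length v = card (At T - D) \<longrightarrow> \<nu> v \<in> Pfin)}"

definition closure :: "table set \<Rightarrow> table set" where
  "closure A = (\<Union>T\<in>A. closure1 T)"

definition closed_class :: "table set \<Rightarrow> bool" where
  "closed_class A \<longleftrightarrow> A \<noteq> {} \<and> A \<subseteq> {T. in_M2 T} \<and> closure A = A"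

definition nontrivial :: "table set \<Rightarrow> bool" where
  "nontrivial A \<longleftrightarrow> (\<exists>T\<in>A. T \<noteq> Lambda)"

text \<open>A 2-decision tree is given by the (nonempty) list of subtrees hanging from the
  unlabelled root via unlabelled edges.\<close>
datatype dtree = Leaf nat | Node nat "(bool \<times> dtree) list"

inductive wf_node :: "dtree \<Rightarrow> bool" where
  "wf_node (Leaf d)"
| "es \<noteq> [] \<Longrightarrow> (\<forall>p\<in>set es. wf_node (snd p)) \<Longrightarrow> wf_node (Node f es)"

inductive det_node :: "dtree \<Rightarrow> bool" where
  "det_node (Leaf d)"
| "distinct (map fst es) \<Longrightarrow> (\<forall>p\<in>set es. det_node (snd p)) \<Longrightarrow> det_node (Node f es)"

inductive occurs :: "nat \<Rightarrow> dtree \<Rightarrow> bool" where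
  "occurs f (Node f es)"
| "p \<in> set es \<Longrightarrow> occurs f (snd p) \<Longrightarrow> occurs f (Node g es)"

inductive path :: "dtree \<Rightarrow> (nat \<times> bool) list \<Rightarrow> nat \<Rightarrow> bool" where
  "path (Leaf d) [] d"
| "(\<delta>, c) \<in> set es \<Longrightarrow> path c w d \<Longrightarrow> path (Node f es) ((f, \<delta>) # w) d"

type_synonym dtree2 = "dtree list"

definition is_2tree :: "dtree2 \<Rightarrow> bool" where
  "is_2tree \<Gamma> \<longleftrightarrow> \<Gamma> \<noteq> [] \<and> (\<forall>c\<in>set \<Gamma>. wf_node c)"

definition tree_At :: "dtree2 \<Rightarrow> nat set" where
  "tree_At \<Gamma> = {f. \<exists>c\<in>set \<Gamma>. occurs f c}"

definition cpath :: "dtree2 \<Rightarrow> (nat \<times> bool) list \<Rightarrow> nat \<Rightarrow> bool" where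
  "cpath \<Gamma> w d \<longleftrightarrow> (\<exists>c\<in>set \<Gamma>. path c w d)"

definition nondet_tree_for :: "table \<Rightarrow> dtree2 \<Rightarrow> bool" where
  "nondet_tree_for T \<Gamma> \<longleftrightarrow> is_2tree \<Gamma> \<and> tree_At \<Gamma> \<subseteq> At T
     \<and> (\<forall>rd\<in>set (rows T). \<exists>w d. cpath \<Gamma> w d \<and> rd \<in> set (rows (subtab T w)))
     \<and> (\<forall>w d. cpath \<Gamma> w d \<longrightarrow> subtab T w = Lambda \<or> d \<in> Pi_tab (subtab T w))"

definition det_tree_for :: "table \<Rightarrow> dtree2 \<Rightarrow> bool" where
  "det_tree_for T \<Gamma> \<longleftrightarrow> nondet_tree_for T \<Gamma> \<and> length \<Gamma> = 1 \<and> (\<forall>c\<in>set \<Gamma>. det_node c)"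

definition partially_bounded_cm :: "(nat list \<Rightarrow> nat) \<Rightarrow> bool" where
  "partially_bounded_cm \<psi> \<longleftrightarrow>
     (\<forall>a. \<psi> a = 0 \<longleftrightarrow> a = [])
   \<and> (\<forall>a b. mset a = mset b \<longrightarrow> \<psi> a = \<psi> b)
   \<and> (\<forall>a b. \<psi> a \<le> \<psi> (a @ b))
   \<and> (\<forall>a b. \<psi> (a @ b) \<le> \<psi> a + \<psi> b)"

definition bounded_cm :: "(nat list \<Rightarrow> nat) \<Rightarrow> bool" where
  "bounded_cm \<psi> \<longleftrightarrow> partially_bounded_cm \<psi> \<and> (\<forall>a. length a \<le> \<psi> a)"

definition psi_word :: "(nat list \<Rightarrow> nat) \<Rightarrow> (nat \<times> bool) list \<Rightarrow> nat" where
  "psi_word \<psi> w = \<psi> (map fst w)"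

definition psi_tree :: "(nat list \<Rightarrow> nat) \<Rightarrow> dtree2 \<Rightarrow> nat" where
  "psi_tree \<psi> \<Gamma> = Max {psi_word \<psi> w | w d. cpath \<Gamma> w d}"

definition psi_d :: "(nat list \<Rightarrow> nat) \<Rightarrow> table \<Rightarrow> nat" where
  "psi_d \<psi> T = (if T = Lambda then 0 else
     (LEAST k. \<exists>\<Gamma>. det_tree_for T \<Gamma> \<and> psi_tree \<psi> \<Gamma> = k))"

definition psi_a :: "(nat list \<Rightarrow> nat) \<Rightarrow> table \<Rightarrow> nat" where
  "psi_a \<psi> T = (if T = Lambda then 0 else
     (LEAST k. \<exists>\<Gamma>. nondet_tree_for T \<Gamma> \<and> psi_tree \<psi> \<Gamma> = k))"

definition m_psi :: "(nat list \<Rightarrow> nat) \<Rightarrow> table \<Rightarrow> nat" where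
  "m_psi \<psi> T = (if At T = {} then 0 else Max {\<psi> [f] | f. f \<in> At T})"

definition annihilating :: "table \<Rightarrow> (nat \<times> bool) list \<Rightarrow> bool" where
  "annihilating T \<alpha> \<longleftrightarrow> in_Omega2 T \<alpha> \<and> subtab T \<alpha> = Lambda
     \<and> (\<forall>f \<delta> \<sigma>. (f, \<delta>) \<in> set \<alpha> \<and> (f, \<sigma>) \<in> set \<alpha> \<longrightarrow> \<delta> = \<sigma>)"

definition irreducible_ann :: "table \<Rightarrow> (nat \<times> bool) list \<Rightarrow> bool" where
  "irreducible_ann T \<alpha> \<longleftrightarrow> annihilating T \<alpha>
     \<and> (\<forall>\<beta>. subseq \<beta> \<alpha> \<and> \<beta> \<noteq> \<alpha> \<longrightarrow> \<not> annihilating T \<beta>)"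

definition G_tab :: "table \<Rightarrow> nat" where
  "G_tab T = (if T = Lambda \<or> \<not> (\<exists>\<alpha>. irreducible_ann T \<alpha>) then 0
              else Max {length \<alpha> | \<alpha>. irreducible_ann T \<alpha>})"

text \<open>Partial functions G_{psi,A} and H^infinity_{psi,A}: None = undefined.\<close>
definition G_class :: "(nat list \<Rightarrow> nat) \<Rightarrow> table set \<Rightarrow> nat \<Rightarrow> nat option" where
  "G_class \<psi> A n = (let S = {G_tab T | T. T \<in> A \<and> m_psi \<psi> T \<le> n}
                     in if finite S then Some (Max S) else None)"

definition H_class :: "(nat list \<Rightarrow> nat) \<Rightarrow> table set \<Rightarrow> nat \<Rightarrow> nat option" where
  "H_class \<psi> A n = (let S = {psi_d \<psi> T | T. T \<in> A \<and> psi_a \<psi> T \<le> n}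
                     in if finite S then Some (Max S) else None)"

end

theory Submission
  imports Defs "HOL-Library.Disjoint_Sets"
begin

text \<open>Let \<open>\<alpha>\<close> be a longest irreducible annihilating word of a table \<open>T \<in> A\<close>. Keeping only the
  columns of \<open>\<alpha>\<close> and labelling every row with the set of attributes at which it violates \<open>\<alpha>\<close>
  yields a table \<open>T\<^sub>\<alpha> \<in> A\<close>. Querying one letter of \<open>\<alpha>\<close> per branch is a nondeterministic
  decision tree for \<open>T\<^sub>\<alpha>\<close>, so \<open>\<psi>\<^sup>a(T\<^sub>\<alpha>) \<le> m\<^sub>\<psi>(T)\<close>. By irreducibility, for every letter
  of \<open>\<alpha>\<close> there is a row of \<open>T\<^sub>\<alpha>\<close> violating exactly that letter; these \<open>|\<alpha>|\<close> rows have pairwise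
  disjoint decision sets and, in every column, all but at most one of them agree. A
  deterministic tree must follow the majority branch and can split off at most one of them
  per query, so some path has length at least \<open>|\<alpha>| - 1\<close>, whence \<open>\<psi>\<^sup>d(T\<^sub>\<alpha>) \<ge> G(T) - 1\<close>.\<close>

definition agrees :: "(nat \<Rightarrow> bool) \<Rightarrow> (nat \<times> bool) list \<Rightarrow> bool" where
  "agrees v w \<longleftrightarrow> (\<forall>fd\<in>set w. v (fst fd) = snd fd)"

lemma agrees_Nil [simp]: "agrees v []"
  and agrees_Cons [simp]: "agrees v ((f, \<delta>) # w) \<longleftrightarrow> v f = \<delta> \<and> agrees v w"
  by (auto simp: agrees_def)

lemma agreesD: "agrees v w \<Longrightarrow> (f, \<delta>) \<in> set w \<Longrightarrow> v f = \<delta>"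
  by (auto simp: agrees_def)

lemma val_outside_cols: "f \<notin> set (cols T) \<Longrightarrow> val T u f = val T v f"
proof -
  assume "f \<notin> set (cols T)"
  then have none: "map_of (zip (cols T) v) f = None" for v
    by (auto simp: map_of_eq_None_iff dest: set_zip_leftD)
  show ?thesis
    by (simp add: val_def none)
qed

lemma set_rows_subtab:
  "set (rows (subtab T w)) = {r \<in> set (rows T). agrees (val T (fst r)) w}"
  by (auto simp: subtab_def Let_def Lambda_def rows_def agrees_def filter_empty_conv)

lemma subtab_eq_Lambda_iff:
  "subtab T w = Lambda \<longleftrightarrow> (\<forall>r\<in>set (rows T). \<not> agrees (val T (fst r)) w)"
proof -
  have "subtab T w = Lambda \<longleftrightarrow> set (rows (subtab T w)) = {}"
    by (auto simp: subtab_def Let_def Lambda_def rows_def)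
  then show ?thesis
    by (auto simp: set_rows_subtab)
qed

lemma mem_Pi_tab_subtab_iff:
  "d \<in> Pi_tab (subtab T w) \<longleftrightarrow> (\<forall>r\<in>set (rows T). agrees (val T (fst r)) w \<longrightarrow> d \<in> snd r)"
  unfolding Pi_tab_def by (auto simp: set_rows_subtab)

lemma subseq_remove1: "subseq (remove1 x xs) xs"
  by (induction xs) auto

lemma annihilating_Lambda: "annihilating Lambda \<alpha> \<Longrightarrow> \<alpha> = []"
  by (cases \<alpha>) (auto simp: annihilating_def in_Omega2_def At_def Lambda_def cols_def)

lemma annihilating_cong_set: "set \<beta> = set \<alpha> \<Longrightarrow> annihilating T \<beta> \<longleftrightarrow> annihilating T \<alpha>"
  unfolding annihilating_def in_Omega2_def subtab_def by simp

lemma irreducible_ann_distinct: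
  assumes "irreducible_ann T \<alpha>"
  shows "distinct \<alpha>"
proof (rule ccontr)
  assume "\<not> distinct \<alpha>"
  then obtain xs y ys where "y \<in> set xs" and \<alpha>: "\<alpha> = xs @ y # ys"
    by (auto simp: not_distinct_conv_prefix)
  then have "subseq (xs @ ys) \<alpha>" "xs @ ys \<noteq> \<alpha>" "set (xs @ ys) = set \<alpha>"
    by (auto simp: list_emb_append_mono subseq_Cons')
  then show False
    using assms annihilating_cong_set unfolding irreducible_ann_def by metis
qed

lemma irreducible_ann_length_le:
  assumes "irreducible_ann T \<alpha>"
  shows "length \<alpha> \<le> 2 * card (At T)"
proof -
  have "set \<alpha> \<subseteq> At T \<times> UNIV"
    using assms by (auto simp: irreducible_ann_def annihilating_def in_Omega2_def)
  then have "card (set \<alpha>) \<le> card (At T \<times> (UNIV :: bool set))"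
    by (intro card_mono) (simp_all add: At_def)
  then show ?thesis
    using distinct_card[OF irreducible_ann_distinct[OF assms]] by (simp add: card_cartesian_product)
qed

lemma G_tab_cases:
  obtains "G_tab T = 0"
  | \<alpha> where "irreducible_ann T \<alpha>" "G_tab T = length \<alpha>"
proof (cases "T = Lambda \<or> \<not> (\<exists>\<alpha>. irreducible_ann T \<alpha>)")
  case True
  then have "G_tab T = 0"
    unfolding G_tab_def by (rule if_P)
  then show ?thesis
    by (rule that(1))
next
  case False
  let ?L = "{length \<alpha> | \<alpha>. irreducible_ann T \<alpha>}"
  have "?L \<subseteq> {..2 * card (At T)}"
    using irreducible_ann_length_le[of T] by auto
  then have "finite ?L"
    by (rule finite_subset) simp
  moreover have "?L \<noteq> {}"
    using False by blast
  ultimately have "Max ?L \<in> ?L"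
    by (rule Max_in)
  moreover have "G_tab T = Max ?L"
    using False unfolding G_tab_def by (rule if_not_P)
  ultimately show ?thesis
    using that(2) by auto
qed

lemma set_dedup_first_subset: "set (dedup_first xs) \<subseteq> set xs"
  unfolding dedup_first_def by auto

lemma dedup_first_keeps_key:
  assumes "x \<in> set xs"
  shows "\<exists>y\<in>set (dedup_first xs). fst y = fst x"
proof -
  obtain i where i: "i < length xs" "xs ! i = x"
    using assms by (auto simp: in_set_conv_nth)
  define j where "j = (LEAST j. fst (xs ! j) = fst x)"
  have j: "fst (xs ! j) = fst x"
    unfolding j_def by (rule LeastI[of _ i]) (simp add: i)
  have "j \<le> i"
    unfolding j_def by (rule Least_le) (simp add: i)
  moreover have "\<forall>k<j. fst (xs ! k) \<noteq> fst (xs ! j)"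
    using j unfolding j_def by (auto dest: not_less_Least)
  ultimately have "xs ! j \<in> set (dedup_first xs)"
    using i unfolding dedup_first_def by (auto intro!: bexI[of _ j])
  then show ?thesis
    using j by blast
qed

lemma map_of_zip_filter:
  assumes "length v = length cs" "P f"
  shows "map_of (zip (filter P cs) (map fst (filter (\<lambda>p. P (snd p)) (zip v cs)))) f
    = map_of (zip cs v) f"
  using assms
proof (induction cs arbitrary: v)
  case (Cons c cs)
  then obtain x xs where "v = x # xs" "length xs = length cs"
    by (cases v) auto
  with Cons show ?case
    by auto
qed simp

definition project_row :: "nat set \<Rightarrow> table \<Rightarrow> bool list \<Rightarrow> bool list" where
  "project_row D T v = map fst (filter (\<lambda>p. snd p \<notin> D) (zip v (cols T)))"

lemma cols_I_op: "\<not> At T \<subseteq> D \<Longrightarrow> cols (I_op D T) = filter (\<lambda>f. f \<notin> D) (cols T)"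
  by (simp add: I_op_def cols_def)

lemma rows_I_op:
  "\<not> At T \<subseteq> D \<Longrightarrow> rows (I_op D T) = dedup_first (map (\<lambda>r. (project_row D T (fst r), snd r)) (rows T))"
  unfolding I_op_def rows_def cols_def project_row_def by simp

lemma val_I_op_project_row:
  assumes "\<not> At T \<subseteq> D" "length v = length (cols T)" "f \<notin> D"
  shows "val (I_op D T) (project_row D T v) f = val T v f"
  using map_of_zip_filter[of v "cols T" "\<lambda>f. f \<notin> D" f] assms
  by (simp add: val_def I_op_def cols_def project_row_def)

lemma I_op_row_origin:
  assumes "\<not> At T \<subseteq> D" "\<forall>r\<in>set (rows T). length (fst r) = length (cols T)"
    and "r \<in> set (rows (I_op D T))"
  shows "\<exists>r'\<in>set (rows T). snd r = snd r' \<and> (\<forall>f. f \<notin> D \<longrightarrow> val (I_op D T) (fst r) f = val T (fst r') f)"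
proof -
  have "r \<in> set (map (\<lambda>r. (project_row D T (fst r), snd r)) (rows T))"
    using assms(3) set_dedup_first_subset unfolding rows_I_op[OF assms(1)] by blast
  then obtain r' where "r' \<in> set (rows T)" "r = (project_row D T (fst r'), snd r')"
    by auto
  then show ?thesis
    using val_I_op_project_row[OF assms(1)] assms(2) by auto
qed

lemma I_op_row_image:
  assumes "\<not> At T \<subseteq> D" "\<forall>r\<in>set (rows T). length (fst r) = length (cols T)"
    and "r' \<in> set (rows T)"
  shows "\<exists>r\<in>set (rows (I_op D T)). \<forall>f. f \<notin> D \<longrightarrow> val (I_op D T) (fst r) f = val T (fst r') f"
proof -
  have "(project_row D T (fst r'), snd r') \<in> set (map (\<lambda>r. (project_row D T (fst r), snd r)) (rows T))"
    using assms(3) by auto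
  then obtain r where "r \<in> set (rows (I_op D T))" "fst r = project_row D T (fst r')"
    using dedup_first_keeps_key unfolding rows_I_op[OF assms(1)] by fastforce
  moreover have "length (fst r') = length (cols T)"
    using assms(2,3) by blast
  ultimately show ?thesis
    using val_I_op_project_row[OF assms(1)] by (intro bexI[of _ r]) simp_all
qed

lemma cols_J_op [simp]: "cols (J_op \<nu> T) = cols T"
  by (simp add: J_op_def cols_def)

lemma val_J_op [simp]: "val (J_op \<nu> T) = val T"
  unfolding val_def cols_J_op ..

lemma set_rows_J_op: "set (rows (J_op \<nu> T)) = (\<lambda>r. (fst r, \<nu> (fst r))) ` set (rows T)"
  by (simp add: J_op_def rows_def)

lemma Lambda_mem_closed_class:
  assumes "closed_class A"
  shows "Lambda \<in> A"
proof -
  obtain T where T: "T \<in> A"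
    using assms unfolding closed_class_def by blast
  have "J_op (\<lambda>_. {0}) (I_op (At T) T) \<in> closure1 T"
    unfolding closure1_def Pfin_def by blast
  moreover have "J_op (\<lambda>_. {0}) (I_op (At T) T) = Lambda"
    by (simp add: I_op_def J_op_def Lambda_def cols_def rows_def)
  ultimately show ?thesis
    using assms T unfolding closed_class_def closure_def by auto
qed

lemma closure1_subset_closed_class: "closed_class A \<Longrightarrow> T \<in> A \<Longrightarrow> closure1 T \<subseteq> A"
  unfolding closed_class_def closure_def by blast

lemma path_Leaf_iff: "path (Leaf d) w d' \<longleftrightarrow> w = [] \<and> d' = d"
  by (blast elim: path.cases intro: path.intros)

lemma path_Node_iff:
  "path (Node f es) w d \<longleftrightarrow> (\<exists>\<delta> c w'. w = (f, \<delta>) # w' \<and> (\<delta>, c) \<in> set es \<and> path c w' d)"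
  by (blast elim: path.cases intro: path.intros)

lemma wf_node_has_path: "wf_node c \<Longrightarrow> \<exists>w d. path c w d"
proof (induction rule: wf_node.induct)
  case (1 d)
  then show ?case
    by (blast intro: path.intros)
next
  case (2 es f)
  then obtain \<delta> c where "(\<delta>, c) \<in> set es"
    by (cases es) auto
  with 2 show ?case
    by (fastforce intro: path.intros)
qed

lemma finite_paths_det_node: "det_node c \<Longrightarrow> finite {(w, d). path c w d}"
proof (induction rule: det_node.induct)
  case (1 d)
  have "{(w, d'). path (Leaf d) w d'} = {([], d)}"
    by (auto simp: path_Leaf_iff)
  then show ?case
    by simp
next
  case (2 es f)
  have "{(w, d). path (Node f es) w d}
      \<subseteq> (\<Union>(\<delta>, c)\<in>set es. (\<lambda>(w, d). ((f, \<delta>) # w, d)) ` {(w, d). path c w d})"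
    by (fastforce simp: path_Node_iff)
  moreover have "finite (\<Union>(\<delta>, c)\<in>set es. (\<lambda>(w, d). ((f, \<delta>) # w, d)) ` {(w, d). path c w d})"
    using 2 by auto
  ultimately show ?case
    by (rule finite_subset)
qed

section \<open>A lower bound for deterministic trees\<close>

definition covers :: "dtree \<Rightarrow> 'r set \<Rightarrow> ('r \<Rightarrow> nat \<Rightarrow> bool) \<Rightarrow> bool" where
  "covers c Q vl \<longleftrightarrow> (\<forall>r\<in>Q. \<exists>w d. path c w d \<and> agrees (vl r) w)"

definition decides :: "dtree \<Rightarrow> 'r set \<Rightarrow> ('r \<Rightarrow> nat \<Rightarrow> bool) \<Rightarrow> ('r \<Rightarrow> nat set) \<Rightarrow> bool" where
  "decides c Q vl dec \<longleftrightarrow> (\<forall>w d r. path c w d \<longrightarrow> r \<in> Q \<longrightarrow> agrees (vl r) w \<longrightarrow> d \<in> dec r)"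

definition almost_constant :: "'r set \<Rightarrow> ('r \<Rightarrow> nat \<Rightarrow> bool) \<Rightarrow> bool" where
  "almost_constant Q vl \<longleftrightarrow> (\<forall>f. \<exists>a. card {r \<in> Q. vl r f \<noteq> a} \<le> 1)"

lemma almost_constant_subset:
  assumes "almost_constant Q vl" "finite Q" "Q' \<subseteq> Q"
  shows "almost_constant Q' vl"
  unfolding almost_constant_def
proof
  fix f
  obtain a where "card {r \<in> Q. vl r f \<noteq> a} \<le> 1"
    using assms(1) unfolding almost_constant_def by blast
  moreover have "card {r \<in> Q'. vl r f \<noteq> a} \<le> card {r \<in> Q. vl r f \<noteq> a}"
    using assms(2,3) by (intro card_mono) auto
  ultimately show "\<exists>a. card {r \<in> Q'. vl r f \<noteq> a} \<le> 1"
    by (intro exI[of _ a]) linarith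
qed

lemma decides_Leaf_card_le_1:
  assumes "finite Q" "decides (Leaf d) Q vl dec" "disjoint_family_on dec Q"
  shows "card Q \<le> 1"
proof (rule ccontr)
  assume "\<not> card Q \<le> 1"
  then obtain r r' where "r \<in> Q" "r' \<in> Q" "r \<noteq> r'"
    using card_le_Suc0_iff_eq[OF assms(1)] by auto
  moreover from this have "d \<in> dec r" "d \<in> dec r'"
    using assms(2) by (auto simp: decides_def path_Leaf_iff)
  ultimately show False
    using disjoint_family_onD[OF assms(3)] by blast
qed

lemma covers_Node_child:
  assumes "distinct (map fst es)" "(a, c) \<in> set es" "covers (Node f es) Q vl"
  shows "covers c {r \<in> Q. vl r f = a} vl"
proof -
  have "c' = c" if "(a, c') \<in> set es" for c'
    using eq_key_imp_eq_value[OF assms(1)] assms(2) that by blast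
  then show ?thesis
    using assms(3) by (fastforce simp: covers_def path_Node_iff)
qed

lemma decides_Node_child:
  assumes "(a, c) \<in> set es" "decides (Node f es) Q vl dec"
  shows "decides c {r \<in> Q. vl r f = a} vl dec"
  using assms by (fastforce simp: decides_def path_Node_iff)

text \<open>Since the values are almost constant, each query splits off at most one element of \<open>Q\<close>
  from the majority branch; by disjointness of the decisions, a leaf is reached by at most one
  element.\<close>

lemma det_node_long_path:
  assumes "det_node c" "wf_node c" "finite Q" "covers c Q vl" "decides c Q vl dec"
    and "disjoint_family_on dec Q" "almost_constant Q vl"
  shows "\<exists>w d. path c w d \<and> card Q \<le> length w + 1"
  using assms
proof (induction arbitrary: Q rule: det_node.induct)
  case (1 d)
  then show ?case
    using decides_Leaf_card_le_1 by (auto simp: path_Leaf_iff)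
next
  case (2 es f)
  obtain a where a: "card {r \<in> Q. vl r f \<noteq> a} \<le> 1"
    using "2.prems"(6) unfolding almost_constant_def by blast
  define Q' where "Q' = {r \<in> Q. vl r f = a}"
  have "Q = Q' \<union> {r \<in> Q. vl r f \<noteq> a}"
    unfolding Q'_def by auto
  then have card_Q: "card Q \<le> card Q' + 1"
    using a card_Un_le[of Q' "{r \<in> Q. vl r f \<noteq> a}"] by simp
  show ?case
  proof (cases "Q' = {}")
    case True
    then show ?thesis
      using card_Q wf_node_has_path[OF "2.prems"(1)] by fastforce
  next
    case False
    then obtain c where c: "(a, c) \<in> set es"
      using "2.prems"(3) by (auto simp: covers_def Q'_def path_Node_iff)
    have "wf_node c"
      using "2.prems"(1) c by (cases rule: wf_node.cases) auto
    moreover have "finite Q'" "disjoint_family_on dec Q'" "almost_constant Q' vl"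
      using "2.prems" almost_constant_subset[of Q vl Q'] by (auto simp: Q'_def disjoint_family_on_def)
    ultimately obtain w d where "path c w d" "card Q' \<le> length w + 1"
      using bspec[OF "2.IH" c] covers_Node_child[OF "2.hyps"(1) c "2.prems"(3)]
        decides_Node_child[OF c "2.prems"(4)]
      unfolding Q'_def by auto
    then have "path (Node f es) ((f, a) # w) d" "card Q \<le> length ((f, a) # w) + 1"
      using c card_Q by (auto intro: path.intros)
    then show ?thesis
      by blast
  qed
qed

lemma nondet_tree_for_covers:
  assumes "nondet_tree_for T \<Gamma>" "r \<in> set (rows T)"
  obtains w d where "cpath \<Gamma> w d" "agrees (val T (fst r)) w"
  using assms that unfolding nondet_tree_for_def set_rows_subtab by blast

lemma nondet_tree_for_correct:
  assumes "nondet_tree_for T \<Gamma>" "cpath \<Gamma> w d" "r \<in> set (rows T)" "agrees (val T (fst r)) w"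
  shows "d \<in> snd r"
proof -
  have "subtab T w \<noteq> Lambda"
    using assms(3,4) by (auto simp: subtab_eq_Lambda_iff)
  then have "d \<in> Pi_tab (subtab T w)"
    using assms(1,2) by (auto simp: nondet_tree_for_def)
  then show ?thesis
    using assms(3,4) by (simp add: mem_Pi_tab_subtab_iff)
qed

lemma det_tree_for_long_path:
  assumes "det_tree_for T \<Gamma>" "Q \<subseteq> set (rows T)" "finite Q"
    and "disjoint_family_on snd Q" "almost_constant Q (\<lambda>r. val T (fst r))"
  obtains w d where "cpath \<Gamma> w d" "card Q \<le> length w + 1"
proof -
  obtain c where \<Gamma>: "\<Gamma> = [c]"
    using assms(1) by (auto simp: det_tree_for_def length_Suc_conv)
  have nondet: "nondet_tree_for T \<Gamma>"
    using assms(1) by (simp add: det_tree_for_def)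
  have "det_node c" "wf_node c"
    using assms(1) \<Gamma> by (auto simp: det_tree_for_def nondet_tree_for_def is_2tree_def)
  moreover have "covers c Q (\<lambda>r. val T (fst r))"
    unfolding covers_def
  proof
    fix r
    assume "r \<in> Q"
    then obtain w d where "cpath \<Gamma> w d" "agrees (val T (fst r)) w"
      using nondet_tree_for_covers[OF nondet] assms(2) by blast
    then show "\<exists>w d. path c w d \<and> agrees (val T (fst r)) w"
      using \<Gamma> by (auto simp: cpath_def)
  qed
  moreover have "decides c Q (\<lambda>r. val T (fst r)) snd"
    unfolding decides_def
  proof (intro allI impI)
    fix w d r
    assume "path c w d" "r \<in> Q" "agrees (val T (fst r)) w"
    moreover from \<open>path c w d\<close> have "cpath \<Gamma> w d"
      using \<Gamma> by (simp add: cpath_def)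
    ultimately show "d \<in> snd r"
      using nondet_tree_for_correct[OF nondet] assms(2) by blast
  qed
  ultimately obtain w d where "path c w d" "card Q \<le> length w + 1"
    using det_node_long_path assms(3-5) by blast
  then show ?thesis
    using that \<Gamma> by (auto simp: cpath_def)
qed

lemma psi_word_le_psi_tree:
  assumes "\<forall>c\<in>set \<Gamma>. det_node c" "cpath \<Gamma> w d"
  shows "psi_word \<psi> w \<le> psi_tree \<psi> \<Gamma>"
proof -
  have "{psi_word \<psi> w | w d. cpath \<Gamma> w d}
      \<subseteq> (\<lambda>(w, d). psi_word \<psi> w) ` (\<Union>c\<in>set \<Gamma>. {(w, d). path c w d})"
    by (auto simp: cpath_def)
  moreover have "finite (\<Union>c\<in>set \<Gamma>. {(w, d). path c w d})"
    using assms(1) finite_paths_det_node by auto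
  ultimately have "finite {psi_word \<psi> w | w d. cpath \<Gamma> w d}"
    using finite_surj by blast
  then show ?thesis
    unfolding psi_tree_def using assms(2) by (intro Max_ge) auto
qed

lemma psi_tree_le:
  assumes "is_2tree \<Gamma>" "\<And>w d. cpath \<Gamma> w d \<Longrightarrow> psi_word \<psi> w \<le> n"
  shows "psi_tree \<psi> \<Gamma> \<le> n"
proof -
  let ?S = "{psi_word \<psi> w | w d. cpath \<Gamma> w d}"
  obtain c where "c \<in> set \<Gamma>" "wf_node c"
    using assms(1) unfolding is_2tree_def by (cases \<Gamma>) auto
  then obtain w d where "cpath \<Gamma> w d"
    using wf_node_has_path unfolding cpath_def by blast
  then have "?S \<noteq> {}"
    by blast
  moreover have "?S \<subseteq> {..n}"
    using assms(2) by blast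
  then have "finite ?S"
    by (rule finite_subset) simp
  ultimately show ?thesis
    unfolding psi_tree_def using assms(2) by (intro Max.boundedI) blast+
qed

lemma psi_a_le_psi_tree: "nondet_tree_for T \<Gamma> \<Longrightarrow> psi_a \<psi> T \<le> psi_tree \<psi> \<Gamma>"
  unfolding psi_a_def by (auto intro: Least_le)

lemma psi_d_attained:
  assumes "T \<noteq> Lambda" "det_tree_for T \<Gamma>"
  obtains \<Gamma>' where "det_tree_for T \<Gamma>'" "psi_tree \<psi> \<Gamma>' = psi_d \<psi> T"
  using LeastI_ex[of "\<lambda>k. \<exists>\<Gamma>. det_tree_for T \<Gamma> \<and> psi_tree \<psi> \<Gamma> = k"] assms that
  unfolding psi_d_def by auto

lemma psi_singleton_le_m_psi:
  assumes "f \<in> At T"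
  shows "\<psi> [f] \<le> m_psi \<psi> T"
proof -
  have "finite {\<psi> [f] | f. f \<in> At T}"
    by (simp add: At_def)
  then show ?thesis
    using assms unfolding m_psi_def by (auto intro: Max_ge)
qed

section \<open>Two decision trees for a word\<close>

text \<open>\<open>chain_tree \<alpha>\<close> tests the letters of \<open>\<alpha>\<close> one after another and answers the attribute
  of the first violated one; its last leaf is reached only by tuples satisfying \<open>\<alpha>\<close>, so its
  label is irrelevant. \<open>star_tree \<alpha>\<close> guesses a violated letter.\<close>

fun chain_tree :: "(nat \<times> bool) list \<Rightarrow> dtree" where
  "chain_tree [] = Leaf 0"
| "chain_tree ((f, b) # xs) = Node f [(\<not> b, Leaf f), (b, chain_tree xs)]"

definition star_tree :: "(nat \<times> bool) list \<Rightarrow> dtree2" where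
  "star_tree \<alpha> = map (\<lambda>(f, b). Node f [(\<not> b, Leaf f)]) \<alpha>"

lemma wf_node_chain_tree: "wf_node (chain_tree xs)"
  by (induction xs rule: chain_tree.induct) (auto intro!: wf_node.intros)

lemma det_node_chain_tree: "det_node (chain_tree xs)"
  by (induction xs rule: chain_tree.induct) (auto intro!: det_node.intros)

lemma occurs_Node_iff: "occurs g (Node f es) \<longleftrightarrow> g = f \<or> (\<exists>p\<in>set es. occurs g (snd p))"
  by (auto elim: occurs.cases intro: occurs.intros)

lemma not_occurs_Leaf: "\<not> occurs g (Leaf d)"
  by (auto elim: occurs.cases)

lemma occurs_chain_tree: "occurs g (chain_tree xs) \<Longrightarrow> g \<in> fst ` set xs"
  by (induction xs rule: chain_tree.induct) (auto simp: occurs_Node_iff not_occurs_Leaf)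

lemma chain_tree_covers: "\<exists>w d. path (chain_tree xs) w d \<and> agrees v w"
proof (induction xs rule: chain_tree.induct)
  case 1
  then show ?case
    by (auto simp: path_Leaf_iff)
next
  case (2 f b xs)
  show ?case
  proof (cases "v f = b")
    case True
    with 2 obtain w d where "path (chain_tree xs) w d" "agrees v w"
      by blast
    with True have "path (chain_tree ((f, b) # xs)) ((f, b) # w) d" "agrees v ((f, b) # w)"
      by (auto simp: path_Node_iff)
    then show ?thesis
      by blast
  next
    case False
    then have "path (chain_tree ((f, b) # xs)) [(f, \<not> b)] f" "agrees v [(f, \<not> b)]"
      by (auto simp: path_Node_iff path_Leaf_iff)
    then show ?thesis
      by blast
  qed
qed

lemma path_chain_tree:
  "path (chain_tree xs) w d \<Longrightarrow> set xs \<subseteq> set w \<or> (\<exists>x\<in>set xs. (fst x, \<not> snd x) \<in> set w \<and> d = fst x)"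
proof (induction xs arbitrary: w rule: chain_tree.induct)
  case (2 f b xs)
  then obtain \<delta> c w' where w: "w = (f, \<delta>) # w'" "(\<delta>, c) \<in> set [(\<not> b, Leaf f), (b, chain_tree xs)]"
    and "path c w' d"
    by (auto simp: path_Node_iff)
  show ?case
  proof (cases "\<delta> = b")
    case True
    with w(2) have "c = chain_tree xs"
      by auto
    with "2.IH" \<open>path c w' d\<close>
    have "set xs \<subseteq> set w' \<or> (\<exists>x\<in>set xs. (fst x, \<not> snd x) \<in> set w' \<and> d = fst x)"
      by blast
    with True w(1) show ?thesis
      by auto
  next
    case False
    with w(2) \<open>path c w' d\<close> have "w' = []" "d = f"
      by (auto simp: path_Leaf_iff)
    with False w(1) show ?thesis
      by (intro disjI2 bexI[of _ "(f, b)"]) auto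
  qed
qed simp

lemma cpath_star_tree_iff:
  "cpath (star_tree \<alpha>) w d \<longleftrightarrow> (\<exists>x\<in>set \<alpha>. w = [(fst x, \<not> snd x)] \<and> d = fst x)"
  by (force simp: cpath_def star_tree_def path_Node_iff path_Leaf_iff)

lemma tree_At_star_tree: "tree_At (star_tree \<alpha>) = fst ` set \<alpha>"
  by (force simp: tree_At_def star_tree_def occurs_Node_iff not_occurs_Leaf)

section \<open>The table of violated letters\<close>

locale irreducible_word =
  fixes T :: table and \<alpha> :: "(nat \<times> bool) list"
  assumes in_M2: "in_M2 T" and irreducible: "irreducible_ann T \<alpha>" and \<alpha>_ne_Nil: "\<alpha> \<noteq> []"
begin

definition attrs :: "nat set" where
  "attrs = fst ` set \<alpha>"

definition T_proj :: table where
  "T_proj = I_op (At T - attrs) T"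

definition violated :: "bool list \<Rightarrow> nat set" where
  "violated v = {f. \<exists>\<delta>. (f, \<delta>) \<in> set \<alpha> \<and> val T_proj v f \<noteq> \<delta>}"

text \<open>No row of \<open>T_proj\<close> satisfies \<open>\<alpha>\<close>, so the default \<open>{0}\<close> only serves to make the
  labelling total on tuples, as required by \<open>J\<close>.\<close>

definition dec :: "bool list \<Rightarrow> nat set" where
  "dec v = (if violated v = {} then {0} else violated v)"

definition T\<^sub>\<alpha> :: table where
  "T\<^sub>\<alpha> = J_op dec T_proj"

lemma annihilating: "annihilating T \<alpha>"
  using irreducible by (simp add: irreducible_ann_def)

lemma T_ne_Lambda: "T \<noteq> Lambda"
  using annihilating annihilating_Lambda \<alpha>_ne_Nil by blast

lemma attrs_subset_At: "attrs \<subseteq> At T"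
  using annihilating by (auto simp: annihilating_def in_Omega2_def attrs_def)

lemma \<alpha>_functional: "(f, \<delta>) \<in> set \<alpha> \<Longrightarrow> (f, \<sigma>) \<in> set \<alpha> \<Longrightarrow> \<delta> = \<sigma>"
  using annihilating unfolding annihilating_def by blast

lemma row_violates_\<alpha>: "r \<in> set (rows T) \<Longrightarrow> \<not> agrees (val T (fst r)) \<alpha>"
  using annihilating by (simp add: annihilating_def subtab_eq_Lambda_iff)

lemma row_lengths: "\<forall>r\<in>set (rows T). length (fst r) = length (cols T)"
  using in_M2 by (simp add: in_M2_def)

lemma not_At_subset: "\<not> At T \<subseteq> At T - attrs"
  using \<alpha>_ne_Nil attrs_subset_At by (auto simp: attrs_def neq_Nil_conv)

lemma val_T\<^sub>\<alpha>: "val T\<^sub>\<alpha> = val T_proj"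
  by (simp add: T\<^sub>\<alpha>_def)

lemma set_cols_T\<^sub>\<alpha>: "set (cols T\<^sub>\<alpha>) = attrs"
  unfolding T\<^sub>\<alpha>_def T_proj_def cols_J_op cols_I_op[OF not_At_subset]
  using attrs_subset_At by (auto simp: At_def)

lemma T\<^sub>\<alpha>_row_origin:
  assumes "r \<in> set (rows T\<^sub>\<alpha>)"
  shows "snd r = dec (fst r) \<and> (\<exists>r'\<in>set (rows T). \<forall>f\<in>attrs. val T\<^sub>\<alpha> (fst r) f = val T (fst r') f)"
proof -
  obtain r1 where "r1 \<in> set (rows T_proj)" "r = (fst r1, dec (fst r1))"
    using assms by (auto simp: T\<^sub>\<alpha>_def set_rows_J_op)
  then show ?thesis
    using I_op_row_origin[OF not_At_subset row_lengths] val_T\<^sub>\<alpha>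
    unfolding T_proj_def by fastforce
qed

lemma T\<^sub>\<alpha>_row_image:
  assumes "r' \<in> set (rows T)"
  shows "\<exists>r\<in>set (rows T\<^sub>\<alpha>). \<forall>f\<in>attrs. val T\<^sub>\<alpha> (fst r) f = val T (fst r') f"
proof -
  obtain r1 where "r1 \<in> set (rows T_proj)" "\<forall>f\<in>attrs. val T_proj (fst r1) f = val T (fst r') f"
    using I_op_row_image[OF not_At_subset row_lengths assms] unfolding T_proj_def by auto
  moreover have "(fst r1, dec (fst r1)) \<in> set (rows T\<^sub>\<alpha>)"
    using calculation(1) by (auto simp: T\<^sub>\<alpha>_def set_rows_J_op)
  ultimately show ?thesis
    using val_T\<^sub>\<alpha> by (intro bexI[of _ "(fst r1, dec (fst r1))"]) simp_all
qed

lemma agrees_on_attrs: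
  assumes "\<forall>f\<in>attrs. u f = v f"
  shows "agrees u \<alpha> \<longleftrightarrow> agrees v \<alpha>"
  using assms by (auto simp: agrees_def attrs_def)

lemma T\<^sub>\<alpha>_row_violates_\<alpha>: "r \<in> set (rows T\<^sub>\<alpha>) \<Longrightarrow> \<not> agrees (val T\<^sub>\<alpha> (fst r)) \<alpha>"
  using T\<^sub>\<alpha>_row_origin row_violates_\<alpha> agrees_on_attrs by metis

lemma violated_mem_decisions:
  assumes "r \<in> set (rows T\<^sub>\<alpha>)" "x \<in> set \<alpha>" "val T\<^sub>\<alpha> (fst r) (fst x) \<noteq> snd x"
  shows "fst x \<in> snd r"
proof -
  have "fst x \<in> violated (fst r)"
    using assms(2,3) val_T\<^sub>\<alpha> by (force simp: violated_def)
  then show ?thesis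
    using T\<^sub>\<alpha>_row_origin[OF assms(1)] by (auto simp: dec_def)
qed

lemma T\<^sub>\<alpha>_ne_Lambda: "T\<^sub>\<alpha> \<noteq> Lambda"
proof -
  have "rows T \<noteq> []"
    using in_M2 T_ne_Lambda by (cases T) (auto simp: in_M2_def Lambda_def cols_def rows_def)
  then have "rows T\<^sub>\<alpha> \<noteq> []"
    using T\<^sub>\<alpha>_row_image by (fastforce simp: neq_Nil_conv)
  then show ?thesis
    by (auto simp: Lambda_def rows_def)
qed

lemma T\<^sub>\<alpha>_mem_closure1: "T\<^sub>\<alpha> \<in> closure1 T"
proof -
  have "violated v \<subseteq> attrs" for v
    by (force simp: violated_def attrs_def)
  then have "dec v \<in> Pfin" for v
    using finite_subset[of "violated v" attrs] by (auto simp: dec_def Pfin_def attrs_def)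
  then show ?thesis
    unfolding closure1_def T\<^sub>\<alpha>_def T_proj_def by blast
qed

lemma star_tree_nondet_tree_for: "nondet_tree_for T\<^sub>\<alpha> (star_tree \<alpha>)"
  unfolding nondet_tree_for_def
proof (intro conjI allI impI ballI)
  show "is_2tree (star_tree \<alpha>)"
    using \<alpha>_ne_Nil by (auto simp: is_2tree_def star_tree_def intro!: wf_node.intros)
  show "tree_At (star_tree \<alpha>) \<subseteq> At T\<^sub>\<alpha>"
    by (simp add: tree_At_star_tree At_def set_cols_T\<^sub>\<alpha> attrs_def)
next
  fix r
  assume r: "r \<in> set (rows T\<^sub>\<alpha>)"
  then obtain x where "x \<in> set \<alpha>" "val T\<^sub>\<alpha> (fst r) (fst x) \<noteq> snd x"
    using T\<^sub>\<alpha>_row_violates_\<alpha>[OF r] unfolding agrees_def by blast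
  with r show "\<exists>w d. cpath (star_tree \<alpha>) w d \<and> r \<in> set (rows (subtab T\<^sub>\<alpha> w))"
    by (auto simp: cpath_star_tree_iff set_rows_subtab intro!: exI[of _ "[(fst x, \<not> snd x)]"])
next
  fix w d
  assume "cpath (star_tree \<alpha>) w d"
  then show "subtab T\<^sub>\<alpha> w = Lambda \<or> d \<in> Pi_tab (subtab T\<^sub>\<alpha> w)"
    using violated_mem_decisions by (auto simp: cpath_star_tree_iff mem_Pi_tab_subtab_iff)
qed

lemma psi_a_T\<^sub>\<alpha>_le_m_psi: "psi_a \<psi> T\<^sub>\<alpha> \<le> m_psi \<psi> T"
proof -
  have "psi_a \<psi> T\<^sub>\<alpha> \<le> psi_tree \<psi> (star_tree \<alpha>)"
    by (rule psi_a_le_psi_tree[OF star_tree_nondet_tree_for])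
  also have "\<dots> \<le> m_psi \<psi> T"
  proof (rule psi_tree_le)
    show "is_2tree (star_tree \<alpha>)"
      using star_tree_nondet_tree_for by (simp add: nondet_tree_for_def)
    fix w d
    assume "cpath (star_tree \<alpha>) w d"
    then show "psi_word \<psi> w \<le> m_psi \<psi> T"
      using psi_singleton_le_m_psi[of _ T] attrs_subset_At
      by (auto simp: cpath_star_tree_iff psi_word_def attrs_def)
  qed
  finally show ?thesis .
qed

lemma chain_tree_det_tree_for: "det_tree_for T\<^sub>\<alpha> [chain_tree \<alpha>]"
  unfolding det_tree_for_def nondet_tree_for_def
proof (intro conjI allI impI ballI)
  show "is_2tree [chain_tree \<alpha>]"
    by (simp add: is_2tree_def wf_node_chain_tree)
  show "tree_At [chain_tree \<alpha>] \<subseteq> At T\<^sub>\<alpha>"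
    using occurs_chain_tree by (auto simp: tree_At_def At_def set_cols_T\<^sub>\<alpha> attrs_def)
  show "det_node c" if "c \<in> set [chain_tree \<alpha>]" for c
    using that det_node_chain_tree by simp
next
  fix r
  assume "r \<in> set (rows T\<^sub>\<alpha>)"
  then show "\<exists>w d. cpath [chain_tree \<alpha>] w d \<and> r \<in> set (rows (subtab T\<^sub>\<alpha> w))"
    using chain_tree_covers[of \<alpha> "val T\<^sub>\<alpha> (fst r)"] by (auto simp: cpath_def set_rows_subtab)
next
  fix w d
  assume "cpath [chain_tree \<alpha>] w d"
  then have "path (chain_tree \<alpha>) w d"
    by (simp add: cpath_def)
  then consider "set \<alpha> \<subseteq> set w" | x where "x \<in> set \<alpha>" "(fst x, \<not> snd x) \<in> set w" "d = fst x"
    using path_chain_tree by blast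
  then show "subtab T\<^sub>\<alpha> w = Lambda \<or> d \<in> Pi_tab (subtab T\<^sub>\<alpha> w)"
  proof cases
    case 1
    then have "agrees v w \<Longrightarrow> agrees v \<alpha>" for v
      by (auto simp: agrees_def)
    then show ?thesis
      using T\<^sub>\<alpha>_row_violates_\<alpha> by (auto simp: subtab_eq_Lambda_iff)
  next
    case 2
    have "d \<in> snd r" if "r \<in> set (rows T\<^sub>\<alpha>)" "agrees (val T\<^sub>\<alpha> (fst r)) w" for r
    proof -
      have "val T\<^sub>\<alpha> (fst r) (fst x) \<noteq> snd x"
        using agreesD[OF that(2) 2(2)] by simp
      then show ?thesis
        using violated_mem_decisions[OF that(1) 2(1)] 2(3) by simp
    qed
    then show ?thesis
      by (simp add: mem_Pi_tab_subtab_iff)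
  qed
qed (simp)

text \<open>Irreducibility: dropping the letter \<open>x\<close> from \<open>\<alpha>\<close> leaves a word satisfied by some row,
  which therefore violates \<open>\<alpha>\<close> exactly at \<open>x\<close>.\<close>

lemma ex_row_violating_exactly:
  assumes "x \<in> set \<alpha>"
  shows "\<exists>r\<in>set (rows T\<^sub>\<alpha>). \<forall>y\<in>set \<alpha>. val T\<^sub>\<alpha> (fst r) (fst y) \<noteq> snd y \<longleftrightarrow> y = x"
proof -
  let ?\<beta> = "remove1 x \<alpha>"
  have set_\<beta>: "set ?\<beta> = set \<alpha> - {x}"
    using irreducible_ann_distinct[OF irreducible] by simp
  have "length ?\<beta> < length \<alpha>"
    using assms length_pos_if_in_set[OF assms] by (simp add: length_remove1)
  then have "subseq ?\<beta> \<alpha>" "?\<beta> \<noteq> \<alpha>"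
    by (auto simp: subseq_remove1)
  then have "\<not> annihilating T ?\<beta>"
    using irreducible by (simp add: irreducible_ann_def)
  moreover have "in_Omega2 T ?\<beta>"
    using annihilating set_\<beta> by (auto simp: annihilating_def in_Omega2_def)
  moreover have "\<forall>f \<delta> \<sigma>. (f, \<delta>) \<in> set ?\<beta> \<and> (f, \<sigma>) \<in> set ?\<beta> \<longrightarrow> \<delta> = \<sigma>"
    using \<alpha>_functional set_\<beta> by blast
  ultimately obtain r' where r': "r' \<in> set (rows T)" "agrees (val T (fst r')) ?\<beta>"
    by (auto simp: annihilating_def subtab_eq_Lambda_iff)
  have "val T (fst r') (fst x) \<noteq> snd x"
    using row_violates_\<alpha>[OF r'(1)] r'(2) set_\<beta> unfolding agrees_def by blast
  then have "\<forall>y\<in>set \<alpha>. val T (fst r') (fst y) \<noteq> snd y \<longleftrightarrow> y = x"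
    using r'(2) set_\<beta> unfolding agrees_def by blast
  moreover obtain r where r: "r \<in> set (rows T\<^sub>\<alpha>)" "\<forall>f\<in>attrs. val T\<^sub>\<alpha> (fst r) f = val T (fst r') f"
    using T\<^sub>\<alpha>_row_image[OF r'(1)] by blast
  moreover have "val T\<^sub>\<alpha> (fst r) (fst y) = val T (fst r') (fst y)" if "y \<in> set \<alpha>" for y
    using r(2) that unfolding attrs_def by blast
  ultimately show ?thesis
    by (intro bexI[of _ r]) simp_all
qed

definition witness :: "nat \<times> bool \<Rightarrow> bool list \<times> nat set" where
  "witness x = (SOME r. r \<in> set (rows T\<^sub>\<alpha>) \<and> (\<forall>y\<in>set \<alpha>. val T\<^sub>\<alpha> (fst r) (fst y) \<noteq> snd y \<longleftrightarrow> y = x))"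

lemma witness:
  assumes "x \<in> set \<alpha>"
  shows "witness x \<in> set (rows T\<^sub>\<alpha>)" "\<And>y. y \<in> set \<alpha> \<Longrightarrow> val T\<^sub>\<alpha> (fst (witness x)) (fst y) \<noteq> snd y \<longleftrightarrow> y = x"
proof -
  have *: "witness x \<in> set (rows T\<^sub>\<alpha>)
      \<and> (\<forall>y\<in>set \<alpha>. val T\<^sub>\<alpha> (fst (witness x)) (fst y) \<noteq> snd y \<longleftrightarrow> y = x)"
    using someI_ex[OF ex_row_violating_exactly[OF assms, unfolded Bex_def]] unfolding witness_def .
  then show "witness x \<in> set (rows T\<^sub>\<alpha>)"
    by (rule conjunct1)
  show "val T\<^sub>\<alpha> (fst (witness x)) (fst y) \<noteq> snd y \<longleftrightarrow> y = x" if "y \<in> set \<alpha>" for y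
    using bspec[OF conjunct2[OF *] that] .
qed

lemma snd_witness:
  assumes "x \<in> set \<alpha>"
  shows "snd (witness x) = {fst x}"
proof -
  have "violated (fst (witness x)) = {fst x}"
  proof (intro equalityI subsetI)
    fix f
    assume "f \<in> violated (fst (witness x))"
    then obtain \<delta> where "(f, \<delta>) \<in> set \<alpha>" "val T\<^sub>\<alpha> (fst (witness x)) f \<noteq> \<delta>"
      unfolding violated_def val_T\<^sub>\<alpha> by blast
    then have "(f, \<delta>) = x"
      using witness(2)[OF assms, of "(f, \<delta>)"] by simp
    then show "f \<in> {fst x}"
      by auto
  next
    fix f
    assume "f \<in> {fst x}"
    moreover have "val T_proj (fst (witness x)) (fst x) \<noteq> snd x"
      using witness(2)[OF assms assms] val_T\<^sub>\<alpha> by simp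
    ultimately show "f \<in> violated (fst (witness x))"
      using assms unfolding violated_def by (intro CollectI exI[of _ "snd x"]) simp
  qed
  then show ?thesis
    using T\<^sub>\<alpha>_row_origin[OF witness(1)[OF assms]] by (simp add: dec_def)
qed

abbreviation witnesses :: "(bool list \<times> nat set) set" where
  "witnesses \<equiv> witness ` set \<alpha>"

lemma card_witnesses: "card witnesses = length \<alpha>"
proof -
  have "inj_on witness (set \<alpha>)"
  proof (rule inj_onI)
    fix x y
    assume "x \<in> set \<alpha>" "y \<in> set \<alpha>" "witness x = witness y"
    then show "x = y"
      using witness(2)[of x y] witness(2)[of y y] by simp
  qed
  then show ?thesis
    using card_image distinct_card[OF irreducible_ann_distinct[OF irreducible]] by metis
qed

lemma witnesses_subset_rows: "witnesses \<subseteq> set (rows T\<^sub>\<alpha>)"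
  using witness(1) by blast

lemma disjoint_family_on_witnesses: "disjoint_family_on snd witnesses"
  using snd_witness \<alpha>_functional by (fastforce simp: disjoint_family_on_def)

lemma almost_constant_witnesses: "almost_constant witnesses (\<lambda>r. val T\<^sub>\<alpha> (fst r))"
  unfolding almost_constant_def
proof
  fix f
  show "\<exists>a. card {r \<in> witnesses. val T\<^sub>\<alpha> (fst r) f \<noteq> a} \<le> 1"
  proof (cases "\<exists>\<delta>. (f, \<delta>) \<in> set \<alpha>")
    case True
    then obtain \<delta> where "(f, \<delta>) \<in> set \<alpha>"
      by blast
    then have "{r \<in> witnesses. val T\<^sub>\<alpha> (fst r) f \<noteq> \<delta>} \<subseteq> {witness (f, \<delta>)}"
      using witness(2) by fastforce
    then have "card {r \<in> witnesses. val T\<^sub>\<alpha> (fst r) f \<noteq> \<delta>} \<le> card {witness (f, \<delta>)}"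
      by (intro card_mono) auto
    then show ?thesis
      by auto
  next
    case False
    then have "f \<notin> set (cols T\<^sub>\<alpha>)"
      by (force simp: set_cols_T\<^sub>\<alpha> attrs_def)
    then have const: "val T\<^sub>\<alpha> (fst r) f = val T\<^sub>\<alpha> [] f" for r
      by (rule val_outside_cols)
    show ?thesis
      by (intro exI[of _ "val T\<^sub>\<alpha> [] f"]) (simp add: const)
  qed
qed

lemma length_le_psi_d_T\<^sub>\<alpha>:
  assumes "bounded_cm \<psi>"
  shows "length \<alpha> \<le> psi_d \<psi> T\<^sub>\<alpha> + 1"
proof -
  obtain \<Gamma> where \<Gamma>: "det_tree_for T\<^sub>\<alpha> \<Gamma>" "psi_tree \<psi> \<Gamma> = psi_d \<psi> T\<^sub>\<alpha>"
    using psi_d_attained[OF T\<^sub>\<alpha>_ne_Lambda chain_tree_det_tree_for] by blast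
  have "finite witnesses"
    by simp
  then obtain w d where "cpath \<Gamma> w d" "card witnesses \<le> length w + 1"
    using det_tree_for_long_path[OF \<Gamma>(1) witnesses_subset_rows _ disjoint_family_on_witnesses
        almost_constant_witnesses]
    by blast
  moreover have "length w \<le> psi_word \<psi> w"
    using assms by (metis bounded_cm_def psi_word_def length_map)
  moreover have "psi_word \<psi> w \<le> psi_tree \<psi> \<Gamma>"
    using \<Gamma>(1) \<open>cpath \<Gamma> w d\<close> by (intro psi_word_le_psi_tree) (auto simp: det_tree_for_def)
  ultimately show ?thesis
    using \<Gamma>(2) card_witnesses by linarith
qed

end

lemma G_tab_le_psi_d:
  assumes "closed_class A" "bounded_cm \<psi>" "T \<in> A"
  obtains T' where "T' \<in> A" "psi_a \<psi> T' \<le> m_psi \<psi> T" "G_tab T \<le> psi_d \<psi> T' + 1"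
proof (cases T rule: G_tab_cases)
  case 1
  then show ?thesis
    using that[of Lambda] Lambda_mem_closed_class[OF assms(1)] by (simp add: psi_a_def)
next
  case (2 \<alpha>)
  show ?thesis
  proof (cases "\<alpha> = []")
    case True
    then show ?thesis
      using 2 that[of Lambda] Lambda_mem_closed_class[OF assms(1)] by (simp add: psi_a_def)
  next
    case False
    interpret irreducible_word T \<alpha>
      using assms(1,3) 2 False by unfold_locales (auto simp: closed_class_def)
    show ?thesis
      using that[of T\<^sub>\<alpha>] closure1_subset_closed_class[OF assms(1,3)] T\<^sub>\<alpha>_mem_closure1
        psi_a_T\<^sub>\<alpha>_le_m_psi length_le_psi_d_T\<^sub>\<alpha>[OF assms(2)] 2
      by auto
  qed
qed

lemma G_tab_le_Max_psi_d:
  assumes "closed_class A" "bounded_cm \<psi>" "finite {psi_d \<psi> T | T. T \<in> A \<and> psi_a \<psi> T \<le> n}"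
    and "T \<in> A" "m_psi \<psi> T \<le> n"
  shows "G_tab T \<le> Max {psi_d \<psi> T | T. T \<in> A \<and> psi_a \<psi> T \<le> n} + 1"
proof -
  obtain T' where "T' \<in> A" "psi_a \<psi> T' \<le> m_psi \<psi> T" "G_tab T \<le> psi_d \<psi> T' + 1"
    using G_tab_le_psi_d[OF assms(1,2,4)] .
  moreover from calculation have "psi_d \<psi> T' \<in> {psi_d \<psi> T | T. T \<in> A \<and> psi_a \<psi> T \<le> n}"
    using assms(5) order_trans by blast
  then have "psi_d \<psi> T' \<le> Max {psi_d \<psi> T | T. T \<in> A \<and> psi_a \<psi> T \<le> n}"
    using assms(3) by (rule Max_ge[rotated])
  ultimately show ?thesis
    by linarith
qed

theorem lemma15:
  fixes A :: "table set" and \<psi> :: "nat list \<Rightarrow> nat"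
  assumes "closed_class A" and "nontrivial A" and "bounded_cm \<psi>"
    and "\<forall>n. H_class \<psi> A n \<noteq> None"
  shows "\<forall>n. G_class \<psi> A n \<noteq> None
           \<and> int (the (H_class \<psi> A n)) \<ge> int (the (G_class \<psi> A n)) - 1"
proof
  fix n
  let ?H = "{psi_d \<psi> T | T. T \<in> A \<and> psi_a \<psi> T \<le> n}"
  let ?G = "{G_tab T | T. T \<in> A \<and> m_psi \<psi> T \<le> n}"
  have "finite ?H"
    using assms(4) by (auto simp: H_class_def Let_def split: if_splits)
  then have H: "H_class \<psi> A n = Some (Max ?H)"
    by (simp add: H_class_def)
  have "?G \<subseteq> {..Max ?H + 1}"
    using G_tab_le_Max_psi_d[OF assms(1,3) \<open>finite ?H\<close>] atMost_iff by blast
  then have "finite ?G"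
    by (rule finite_subset) simp
  then have G: "G_class \<psi> A n = Some (Max ?G)"
    by (simp add: G_class_def)
  have "m_psi \<psi> Lambda \<le> n"
    by (simp add: m_psi_def At_def Lambda_def cols_def)
  then have "?G \<noteq> {}"
    using Lambda_mem_closed_class[OF assms(1)] by blast
  then have "Max ?G \<le> Max ?H + 1"
    using \<open>finite ?G\<close> \<open>?G \<subseteq> {..Max ?H + 1}\<close> by auto
  then show "G_class \<psi> A n \<noteq> None \<and> int (the (H_class \<psi> A n)) \<ge> int (the (G_class \<psi> A n)) - 1"
    using G H by simp
qed

end
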